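(* Let $1<\alpha<2$ and $0<r<1$. Let $p,q$ be real numbers for which $k(x):=x^{p}(1-x)^{q}$ is integrable on $(0,1)$, and let $K(x):=\int_0^x k(s)\,ds$. If (i) $3-\alpha+p+q=1$, and (ii) $r\sin(\pi(-q))=(1-r)\sin(\pi(-p))$, then $K$ belongs to the kernel of $\mathcal{L}_r^{\alpha}$, i.e. $\mathcal{L}_r^{\alpha}K=0$ on $(0,1)$.
   Context: Let $D=d/dx$. For $\sigma>0$ and $u$ on $(0,1)$: $\mathbf{D}^{-\sigma}u(x)=\frac{1}{\Gamma(\sigma)}\int_0^x (x-s)^{\sigma-1}u(s)\,ds$ and $\mathbf{D}^{-\sigma*}u(x)=\frac{1}{\Gamma(\sigma)}\int_x^1 (s-x)^{\sigma-1}u(s)\,ds$. For $1<\alpha<2$, $\mathbf{D}^{\alpha}u:=D\,\mathbf{D}^{-(2-\alpha)}\,Du$, $\mathbf{D}^{\alpha*}u:=D\,\mathbf{D}^{-(2-\alpha)*}\,Du$, and $\mathcal{L}_r^{\alpha}u:=-\big(r\,\mathbf{D}^{\alpha}u+(1-r)\,\mathbf{D}^{\alpha*}u\big)$ (note: this is not the Riemann–Liouville nor the Caputo fractional derivative). *)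

theory Defs
  imports "HOL-Analysis.Analysis"
begin

definition frac_int :: "real \<Rightarrow> (real \<Rightarrow> real) \<Rightarrow> real \<Rightarrow> real" where
  "frac_int \<sigma> u x = (1 / Gamma \<sigma>) * integral {0..x} (\<lambda>s. (x - s) powr (\<sigma> - 1) * u s)"

definition frac_int_star :: "real \<Rightarrow> (real \<Rightarrow> real) \<Rightarrow> real \<Rightarrow> real" where
  "frac_int_star \<sigma> u x = (1 / Gamma \<sigma>) * integral {x..1} (\<lambda>s. (s - x) powr (\<sigma> - 1) * u s)"

definition frac_D :: "real \<Rightarrow> (real \<Rightarrow> real) \<Rightarrow> real \<Rightarrow> real" where
  "frac_D \<alpha> u x = deriv (frac_int (2 - \<alpha>) (deriv u)) x"

definition frac_D_star :: "real \<Rightarrow> (real \<Rightarrow> real) \<Rightarrow> real \<Rightarrow> real" where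
  "frac_D_star \<alpha> u x = deriv (frac_int_star (2 - \<alpha>) (deriv u)) x"

definition frac_L :: "real \<Rightarrow> real \<Rightarrow> (real \<Rightarrow> real) \<Rightarrow> real \<Rightarrow> real" where
  "frac_L r \<alpha> u x = - (r * frac_D \<alpha> u x + (1 - r) * frac_D_star \<alpha> u x)"

end

theory Submission
  imports Defs "HOL-Complex_Analysis.Complex_Analysis"
begin

(*
  Write \<mu> = \<alpha> - 1 and k(s) = s^p (1 - s)^q. Integrability of k gives p, q > -1, condition (i)
  reads p + q = \<mu> - 1, and then condition (ii) forces p, q < 0. Up to the factor \<Gamma>(2 - \<alpha>),
  the two fractional integrals of K' = k are
    A(y) = \<integral>\<^sub>0\<^sup>y (y - s)^(-\<mu>) k(s) ds   and   B(y) = \<integral>\<^sub>y\<^sup>1 (s - y)^(-\<mu>) k(s) ds.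
  The heart of the proof is the identity sin(\<pi> p) A(y) + sin(\<pi> q) B(y) = -\<pi> on (0, 1).
  It comes from integrating the branch G(z) = z^p (z - y)^(-\<mu>) (z - 1)^q that is holomorphic
  in the upper half plane over the boundary of a large half disc: on the real axis Im G equals
  sin(\<pi> p) |G| on (0, y), sin(\<pi> q) |G| on (y, 1) and 0 elsewhere, while p - \<mu> + q = -1 makes
  G(z) = 1/z + o(1/|z|), so that in the limit the arc contributes i\<pi> and the real axis -i\<pi>. Hence
  B' = -(sin(\<pi> p) / sin(\<pi> q)) A', and condition (ii) makes r A' + (1 - r) B' vanish.
  Differentiability of A follows from the substitution s = y t, which turns A(y) into
  y^(1+p-\<mu>) times a parameter integral with a smooth dependence on y.
*)

section \<open>Integrability of power singularities\<close>

lemma abs_powr_integrable: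
  fixes a \<beta> L U :: real
  assumes "-1 < \<beta>"
  shows "(\<lambda>t. \<bar>t - a\<bar> powr \<beta>) integrable_on {L..U}"
proof (cases "L \<le> U")
  case True
  define F where "F t = sgn (t - a) * \<bar>t - a\<bar> powr (\<beta> + 1) / (\<beta> + 1)" for t
  have F_deriv: "(F has_real_derivative \<bar>t - a\<bar> powr \<beta>) (at t)" if "t \<noteq> a" for t
  proof (cases "a < t")
    case True
    have "((\<lambda>t. (t - a) powr (\<beta> + 1) / (\<beta> + 1)) has_real_derivative \<bar>t - a\<bar> powr \<beta>) (at t)"
      using True assms by (auto intro!: derivative_eq_intros)
    then show ?thesis
      by (rule has_field_derivative_transform_within_open[where S = "{a<..}"])
         (use True in \<open>auto simp: F_def\<close>)
  next
    case False
    with that have "t < a" by simp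
    then have "((\<lambda>t. - ((a - t) powr (\<beta> + 1) / (\<beta> + 1))) has_real_derivative \<bar>t - a\<bar> powr \<beta>) (at t)"
      using assms by (auto intro!: derivative_eq_intros)
    then show ?thesis
      by (rule has_field_derivative_transform_within_open[where S = "{..<a}"])
         (use \<open>t < a\<close> in \<open>auto simp: F_def\<close>)
  qed
  have "(F \<longlongrightarrow> F a) (at a)"
  proof -
    have "((\<lambda>t. \<bar>t - a\<bar> powr (\<beta> + 1) / (\<beta> + 1)) \<longlongrightarrow> \<bar>a - a\<bar> powr (\<beta> + 1) / (\<beta> + 1)) (at a)"
      using assms by (intro tendsto_intros) auto
    moreover have "\<bar>F t\<bar> = \<bar>t - a\<bar> powr (\<beta> + 1) / (\<beta> + 1)" for t
      using assms by (cases "t = a") (auto simp: F_def abs_mult)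
    ultimately have "((\<lambda>t. \<bar>F t\<bar>) \<longlongrightarrow> 0) (at a)"
      by simp
    then show ?thesis
      by (simp only: tendsto_rabs_zero_iff) (simp add: F_def [abs_def])
  qed
  then have "isCont F t" for t
    using F_deriv DERIV_isCont by (cases "t = a") (auto simp: isCont_def)
  then have "((\<lambda>t. \<bar>t - a\<bar> powr \<beta>) has_integral (F U - F L)) {L..U}"
    using True F_deriv
    by (intro fundamental_theorem_of_calculus_interior_strong[where S = "{a}"])
       (auto simp: continuous_at_imp_continuous_on has_real_derivative_iff_has_vector_derivative)
  then show ?thesis by blast
qed (simp add: integrable_on_empty)

lemma nonneg_integrable_mult_continuous:
  fixes h g :: "real \<Rightarrow> real"
  assumes "h integrable_on {a..b}" "\<And>t. t \<in> {a..b} \<Longrightarrow> 0 \<le> h t"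
    and "continuous_on {a..b} g"
  shows "(\<lambda>t. h t * g t) integrable_on {a..b}"
proof -
  have "(\<lambda>t. g t * h t) absolutely_integrable_on {a..b}"
  proof (rule absolutely_integrable_bounded_measurable_product_real)
    show "g \<in> borel_measurable (lebesgue_on {a..b})"
      using assms(3) by (rule continuous_imp_measurable_on_sets_lebesgue) simp
    show "bounded (g ` {a..b})"
      using assms(3) by (intro compact_imp_bounded compact_continuous_image) simp_all
    show "h absolutely_integrable_on {a..b}"
      using assms(1,2) by (rule nonnegative_absolutely_integrable_1)
  qed simp
  then show ?thesis
    by (simp add: absolutely_integrable_on_def mult.commute)
qed

lemma abs_powr_prod_integrable:
  fixes P :: "real set" and \<beta> :: "real \<Rightarrow> real"
  assumes "finite P" "\<And>a. a \<in> P \<Longrightarrow> -1 < \<beta> a"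
  shows "(\<lambda>t. \<Prod>a\<in>P. \<bar>t - a\<bar> powr \<beta> a) integrable_on {L..U}"
proof -
  have "(\<lambda>t. \<Prod>a\<in>P. \<bar>t - a\<bar> powr \<beta> a) integrable_on cbox L U"
  proof (rule integrable_on_little_subintervals, intro ballI)
    fix x
    obtain d where d: "0 < d" "\<And>a. a \<in> P \<Longrightarrow> a \<noteq> x \<Longrightarrow> d \<le> dist x a"
      using finite_set_avoid[OF assms(1)] by blast
    define h where "h t = (\<Prod>a\<in>P \<inter> {x}. \<bar>t - a\<bar> powr \<beta> a)" for t
    define g where "g t = (\<Prod>a\<in>P - {x}. \<bar>t - a\<bar> powr \<beta> a)" for t
    have g_cont: "continuous_on (ball x d) g"
      unfolding g_def
    proof (intro continuous_intros ballI)
      fix t a assume "t \<in> ball x d" "a \<in> P - {x}"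
      with d(2)[of a] show "\<bar>t - a\<bar> \<noteq> 0"
        by (auto simp: dist_real_def)
    qed
    have h_integrable: "h integrable_on {u..v}" for u v
    proof (cases "x \<in> P")
      case True
      then have "P \<inter> {x} = {x}" by auto
      then show ?thesis
        using assms(2)[OF True] by (simp add: h_def[abs_def] abs_powr_integrable)
    qed (simp add: h_def[abs_def] integrable_const_ivl)
    have "(\<lambda>t. h t * g t) integrable_on {u..v}" if "{u..v} \<subseteq> ball x d" for u v
      using h_integrable _ continuous_on_subset[OF g_cont that]
      by (rule nonneg_integrable_mult_continuous) (simp add: h_def prod_nonneg)
    moreover have "(\<Prod>a\<in>P. \<bar>t - a\<bar> powr \<beta> a) = h t * g t" for t
      unfolding h_def g_def using assms(1) by (rule prod.Int_Diff)
    ultimately show "\<exists>d>0. \<forall>u v. x \<in> cbox u v \<and> cbox u v \<subseteq> ball x d \<and> cbox u v \<subseteq> cbox L U \<longrightarrow>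
        (\<lambda>t. \<Prod>a\<in>P. \<bar>t - a\<bar> powr \<beta> a) integrable_on cbox u v"
      using d(1) by auto
  qed
  then show ?thesis by simp
qed

lemma beta_kernel_integrable:
  fixes a b :: real
  assumes "-1 < a" "-1 < b"
  shows "(\<lambda>t. t powr a * (1 - t) powr b) integrable_on {0..1}"
proof -
  define \<beta> where "\<beta> c = (if c = 0 then a else b)" for c :: real
  have "(\<lambda>t. \<Prod>c\<in>{0, 1}. \<bar>t - c\<bar> powr \<beta> c) integrable_on {0..1}"
    using assms by (intro abs_powr_prod_integrable) (auto simp: \<beta>_def)
  then show ?thesis
    by (rule integrable_eq) (auto simp: \<beta>_def abs_if)
qed

lemma abs_powr_not_integrable_right:
  fixes a c p :: real
  assumes "p \<le> -1" "0 < c"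
  shows "\<not> (\<lambda>s. \<bar>s - a\<bar> powr p) integrable_on {a..a + c}"
proof
  assume integrable: "(\<lambda>s. \<bar>s - a\<bar> powr p) integrable_on {a..a + c}"
  define c' where "c' = min c 1"
  have c': "0 < c'" "c' \<le> c" "c' \<le> 1"
    using assms(2) by (auto simp: c'_def)
  define I where "I = integral {a..a + c'} (\<lambda>s. \<bar>s - a\<bar> powr p)"
  define \<epsilon> where "\<epsilon> = c' * exp (- (\<bar>I\<bar> + 1))"
  have \<epsilon>: "0 < \<epsilon>" "\<epsilon> < c'"
    using c' by (auto simp: \<epsilon>_def)
  have integrable': "(\<lambda>s. \<bar>s - a\<bar> powr p) integrable_on {a..a + c'}"
    by (rule integrable_subinterval_real[OF integrable]) (use c' in auto)
  have "((\<lambda>s. 1 / (s - a)) has_integral (ln (a + c' - a) - ln (a + \<epsilon> - a))) {a + \<epsilon>..a + c'}"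
  proof (rule fundamental_theorem_of_calculus)
    show "((\<lambda>s. ln (s - a)) has_vector_derivative 1 / (s - a)) (at s within {a + \<epsilon>..a + c'})"
      if "s \<in> {a + \<epsilon>..a + c'}" for s
      using that \<epsilon> by (auto intro!: derivative_eq_intros
          simp: has_real_derivative_iff_has_vector_derivative[symmetric])
  qed (use \<epsilon> in auto)
  moreover have "ln c' - ln \<epsilon> = \<bar>I\<bar> + 1"
    using c' by (simp add: \<epsilon>_def ln_mult)
  ultimately have "\<bar>I\<bar> + 1 = integral {a + \<epsilon>..a + c'} (\<lambda>s. 1 / (s - a))"
    by (simp add: integral_unique)
  also have "\<dots> \<le> integral {a + \<epsilon>..a + c'} (\<lambda>s. \<bar>s - a\<bar> powr p)"
  proof (rule integral_le)
    show "(\<lambda>s. \<bar>s - a\<bar> powr p) integrable_on {a + \<epsilon>..a + c'}"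
      by (rule integrable_subinterval_real[OF integrable']) (use \<epsilon> in auto)
    show "1 / (s - a) \<le> \<bar>s - a\<bar> powr p" if "s \<in> {a + \<epsilon>..a + c'}" for s
      using powr_mono'[of p "-1" "\<bar>s - a\<bar>"] that assms(1) c' \<epsilon> by (simp add: powr_minus_divide)
  qed (use \<open>(_ has_integral _) {a + \<epsilon>..a + c'}\<close> in blast)
  also have "\<dots> \<le> I"
    unfolding I_def using \<epsilon> integrable' 
    by (intro integral_subset_le integrable_subinterval_real[OF integrable']) auto
  finally show False by simp
qed

lemma abs_powr_not_integrable_left:
  fixes a c p :: real
  assumes "p \<le> -1" "0 < c"
  shows "\<not> (\<lambda>s. \<bar>s - a\<bar> powr p) integrable_on {a - c..a}"
proof
  assume "(\<lambda>s. \<bar>s - a\<bar> powr p) integrable_on {a - c..a}"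
  then have "(\<lambda>s. \<bar>-s - a\<bar> powr p) integrable_on {-a..-a + c}"
    using Henstock_Kurzweil_Integration.integrable_reflect_real[where f = "\<lambda>s. \<bar>s - a\<bar> powr p" and a = "a - c" and b = a] by simp
  then have "(\<lambda>s. \<bar>s - (-a)\<bar> powr p) integrable_on {-a..-a + c}"
    by (simp add: abs_minus_commute add.commute)
  with abs_powr_not_integrable_right[OF assms] show False by blast
qed

lemma beta_kernel_integrable_imp_exponents:
  fixes p q :: real
  assumes "(\<lambda>s. s powr p * (1 - s) powr q) integrable_on {0..1}"
  shows "-1 < p" "-1 < q"
proof -
  have "(\<lambda>s. s powr p * (1 - s) powr q * (1 - s) powr (-q)) integrable_on {0..1/2}"
    by (rule nonneg_integrable_mult_continuous[OF integrable_subinterval_real[OF assms]])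
       (auto intro!: continuous_intros)
  then have "(\<lambda>s. \<bar>s\<bar> powr p) integrable_on {0..1/2}"
    by (rule integrable_eq) (simp add: powr_minus)
  then show "-1 < p"
    using abs_powr_not_integrable_right[of p "1/2" 0] by fastforce
  have "(\<lambda>s. s powr p * (1 - s) powr q * s powr (-p)) integrable_on {1/2..1}"
    by (rule nonneg_integrable_mult_continuous[OF integrable_subinterval_real[OF assms]])
       (auto intro!: continuous_intros)
  then have "(\<lambda>s. \<bar>s - 1\<bar> powr q) integrable_on {1/2..1}"
    by (rule integrable_eq) (auto simp: powr_minus abs_if)
  then show "-1 < q"
    using abs_powr_not_integrable_left[of q "1/2" 1] by fastforce
qed

section \<open>Differentiation under a weighted integral\<close>

lemma uniform_first_order_remainder:
  fixes \<phi> \<phi>' :: "real \<Rightarrow> real \<Rightarrow> real"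
  assumes "open U" "x \<in> U"
    and \<phi>_deriv: "\<And>y t. y \<in> U \<Longrightarrow> t \<in> {a..b} \<Longrightarrow> ((\<lambda>y. \<phi> y t) has_real_derivative \<phi>' y t) (at y)"
    and \<phi>'_cont: "continuous_on (U \<times> {a..b}) (\<lambda>(y, t). \<phi>' y t)"
    and "0 < \<epsilon>"
  shows "\<exists>d>0. \<forall>y t. \<bar>y - x\<bar> < d \<longrightarrow> t \<in> {a..b} \<longrightarrow>
    \<bar>\<phi> y t - \<phi> x t - (y - x) * \<phi>' x t\<bar> \<le> \<epsilon> * \<bar>y - x\<bar>"
proof -
  obtain \<delta> where \<delta>: "0 < \<delta>" "cball x \<delta> \<subseteq> U"
    using assms(1,2) open_contains_cball by blast
  define K where "K = cball x \<delta> \<times> {a..b}"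
  have "uniformly_continuous_on K (\<lambda>(y, t). \<phi>' y t)"
    using \<delta> by (intro compact_uniformly_continuous continuous_on_subset[OF \<phi>'_cont])
       (auto simp: K_def intro!: compact_Times)
  then obtain d where d: "0 < d"
    "\<And>u v. u \<in> K \<Longrightarrow> v \<in> K \<Longrightarrow> dist u v < d \<Longrightarrow> dist ((\<lambda>(y, t). \<phi>' y t) u) ((\<lambda>(y, t). \<phi>' y t) v) < \<epsilon>"
    using \<open>0 < \<epsilon>\<close> unfolding uniformly_continuous_on_def by metis
  have "\<bar>\<phi> y t - \<phi> x t - (y - x) * \<phi>' x t\<bar> \<le> \<epsilon> * \<bar>y - x\<bar>"
    if y: "\<bar>y - x\<bar> < min d \<delta>" and t: "t \<in> {a..b}" for y t
  proof -
    have near: "\<bar>z - x\<bar> < min d \<delta>" if "z \<in> closed_segment x y" for z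
      using segment_bound1[OF that] y by simp
    have "norm ((\<phi> y t - \<phi>' x t * y) - (\<phi> x t - \<phi>' x t * x)) \<le> \<epsilon> * norm (y - x)"
    proof (rule field_differentiable_bound[OF convex_closed_segment])
      fix z assume z: "z \<in> closed_segment x y"
      then have "z \<in> U"
        using near[OF z] \<delta>(2) by (auto simp: dist_real_def abs_minus_commute)
      then show "((\<lambda>z. \<phi> z t - \<phi>' x t * z) has_field_derivative \<phi>' z t - \<phi>' x t)
          (at z within closed_segment x y)"
        using DERIV_diff[OF \<phi>_deriv[OF _ t] DERIV_cmult_Id] by (blast intro: has_field_derivative_at_within)
      have "(z, t) \<in> K" "(x, t) \<in> K" "dist (z, t) (x, t) < d"
        using near[OF z] t \<delta>(1) by (auto simp: K_def dist_Pair_Pair dist_real_def abs_minus_commute)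
      then show "norm (\<phi>' z t - \<phi>' x t) \<le> \<epsilon>"
        using d(2)[of "(z, t)" "(x, t)"] by (simp add: dist_real_def)
    qed auto
    then show ?thesis
      by (simp add: algebra_simps)
  qed
  then show ?thesis
    using d(1) \<delta>(1) by (intro exI[of _ "min d \<delta>"]) auto
qed

lemma norm_integral_mult_le:
  fixes h g :: "real \<Rightarrow> real"
  assumes "h integrable_on {a..b}" "\<And>t. t \<in> {a..b} \<Longrightarrow> 0 \<le> h t"
    and "continuous_on {a..b} g" "\<And>t. t \<in> {a..b} \<Longrightarrow> \<bar>g t\<bar> \<le> c"
  shows "\<bar>integral {a..b} (\<lambda>t. h t * g t)\<bar> \<le> c * integral {a..b} h"
proof -
  have "norm (integral {a..b} (\<lambda>t. h t * g t)) \<le> integral {a..b} (\<lambda>t. h t * c)"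
  proof (rule integral_norm_bound_integral)
    show "(\<lambda>t. h t * g t) integrable_on {a..b}" "(\<lambda>t. h t * c) integrable_on {a..b}"
      using assms(1-3) by (auto intro: nonneg_integrable_mult_continuous)
    show "norm (h t * g t) \<le> h t * c" if "t \<in> {a..b}" for t
      using mult_left_mono[OF assms(4)[OF that] assms(2)[OF that]] assms(2)[OF that]
      by (simp add: abs_mult)
  qed
  then show ?thesis
    by (simp add: mult.commute)
qed

lemma has_real_derivative_weighted_integral:
  fixes h :: "real \<Rightarrow> real" and \<phi> \<phi>' :: "real \<Rightarrow> real \<Rightarrow> real"
  assumes h: "h integrable_on {a..b}" "\<And>t. t \<in> {a..b} \<Longrightarrow> 0 \<le> h t"
    and U: "open U" "x \<in> U"
    and \<phi>_deriv: "\<And>y t. y \<in> U \<Longrightarrow> t \<in> {a..b} \<Longrightarrow> ((\<lambda>y. \<phi> y t) has_real_derivative \<phi>' y t) (at y)"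
    and \<phi>'_cont: "continuous_on (U \<times> {a..b}) (\<lambda>(y, t). \<phi>' y t)"
    and \<phi>_cont: "\<And>y. y \<in> U \<Longrightarrow> continuous_on {a..b} (\<phi> y)"
  shows "((\<lambda>y. integral {a..b} (\<lambda>t. h t * \<phi> y t)) has_real_derivative
           integral {a..b} (\<lambda>t. h t * \<phi>' x t)) (at x)"
  unfolding has_field_derivative_def has_derivative_at_alt
proof (intro conjI allI impI)
  show "bounded_linear ((*) (integral {a..b} (\<lambda>t. h t * \<phi>' x t)))"
    by (rule bounded_linear_mult_right)
  have "continuous_on {a..b} (\<lambda>t. (\<lambda>(y, t). \<phi>' y t) (x, t))"
    by (rule continuous_on_compose2[OF \<phi>'_cont]) (use U(2) in \<open>auto intro!: continuous_intros\<close>)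
  then have \<phi>'_x_cont: "continuous_on {a..b} (\<phi>' x)"
    by simp
  obtain \<delta> where \<delta>: "0 < \<delta>" "ball x \<delta> \<subseteq> U"
    using U openE by blast
  fix \<epsilon> :: real assume "0 < \<epsilon>"
  define M where "M = integral {a..b} h + 1"
  have "0 \<le> integral {a..b} h"
    using h by (intro integral_nonneg) auto
  then have "0 < M"
    by (simp add: M_def)
  obtain d where d: "0 < d" "\<And>y t. \<bar>y - x\<bar> < d \<Longrightarrow> t \<in> {a..b} \<Longrightarrow>
      \<bar>\<phi> y t - \<phi> x t - (y - x) * \<phi>' x t\<bar> \<le> \<epsilon> / M * \<bar>y - x\<bar>"
    using uniform_first_order_remainder[OF U \<phi>_deriv \<phi>'_cont, of "\<epsilon> / M"] \<open>0 < \<epsilon>\<close> \<open>0 < M\<close> by auto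
  have "norm (integral {a..b} (\<lambda>t. h t * \<phi> y t) - integral {a..b} (\<lambda>t. h t * \<phi> x t)
        - integral {a..b} (\<lambda>t. h t * \<phi>' x t) * (y - x)) \<le> \<epsilon> * norm (y - x)"
    if y: "norm (y - x) < min d \<delta>" for y
  proof -
    have "y \<in> U"
      using y \<delta>(2) by (auto simp: dist_real_def)
    then have "((\<lambda>t. h t * \<phi> y t - h t * \<phi> x t - (y - x) * (h t * \<phi>' x t)) has_integral
        integral {a..b} (\<lambda>t. h t * \<phi> y t) - integral {a..b} (\<lambda>t. h t * \<phi> x t)
        - (y - x) * integral {a..b} (\<lambda>t. h t * \<phi>' x t)) {a..b}"
      using U(2) h \<phi>'_x_cont
      by (intro has_integral_diff has_integral_mult_right integrable_integral
          nonneg_integrable_mult_continuous \<phi>_cont)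
    then have "integral {a..b} (\<lambda>t. h t * \<phi> y t) - integral {a..b} (\<lambda>t. h t * \<phi> x t)
          - integral {a..b} (\<lambda>t. h t * \<phi>' x t) * (y - x)
        = integral {a..b} (\<lambda>t. h t * (\<phi> y t - \<phi> x t - (y - x) * \<phi>' x t))"
      by (simp add: integral_unique algebra_simps)
    also have "\<bar>\<dots>\<bar> \<le> \<epsilon> / M * \<bar>y - x\<bar> * integral {a..b} h"
      using \<open>y \<in> U\<close> U(2) \<phi>'_x_cont d(2) y
      by (intro norm_integral_mult_le h continuous_intros \<phi>_cont) auto
    also have "\<dots> \<le> \<epsilon> / M * \<bar>y - x\<bar> * M"
      using \<open>0 < \<epsilon>\<close> \<open>0 < M\<close> by (intro mult_left_mono) (auto simp: M_def)
    finally show ?thesis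
      using \<open>0 < M\<close> by simp
  qed
  then show "\<exists>d>0. \<forall>y. norm (y - x) < d \<longrightarrow> norm (integral {a..b} (\<lambda>t. h t * \<phi> y t) -
      integral {a..b} (\<lambda>t. h t * \<phi> x t) - integral {a..b} (\<lambda>t. h t * \<phi>' x t) * (y - x))
      \<le> \<epsilon> * norm (y - x)"
    using d(1) \<delta>(1) by (intro exI[of _ "min d \<delta>"]) auto
qed

section \<open>The fractional integrals of the kernel\<close>

locale frac_kernel =
  fixes \<mu> p q :: real
  assumes mu_pos: "0 < \<mu>" and mu_lt_1: "\<mu> < 1"
    and p_gt: "-1 < p" and p_neg: "p < 0" and q_gt: "-1 < q" and q_neg: "q < 0"
    and exponent_sum: "p + q = \<mu> - 1"
begin

(* Up to the factor \<Gamma>(1 - \<mu>), these are the fractional integrals D^(-(1-\<mu>)) k and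
   D^(-(1-\<mu>))* k of k(s) = s^p (1 - s)^q. *)
definition left_integral :: "real \<Rightarrow> real" where
  "left_integral y = integral {0..y} (\<lambda>s. (y - s) powr (-\<mu>) * (s powr p * (1 - s) powr q))"

definition right_integral :: "real \<Rightarrow> real" where
  "right_integral y = integral {y..1} (\<lambda>s. (s - y) powr (-\<mu>) * (s powr p * (1 - s) powr q))"

definition abs_kernel :: "real \<Rightarrow> real \<Rightarrow> real" where
  "abs_kernel y s = \<bar>s\<bar> powr p * \<bar>s - y\<bar> powr (-\<mu>) * \<bar>s - 1\<bar> powr q"

lemma abs_kernel_integrable:
  assumes "0 < y" "y < 1"
  shows "abs_kernel y integrable_on {L..U}"
proof -
  define \<beta> where "\<beta> a = (if a = 0 then p else if a = y then -\<mu> else q)" for a :: real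
  have "(\<lambda>s. \<Prod>a\<in>{0, y, 1}. \<bar>s - a\<bar> powr \<beta> a) integrable_on {L..U}"
    using p_gt q_gt mu_lt_1 by (intro abs_powr_prod_integrable) (auto simp: \<beta>_def)
  then show ?thesis
    using assms by (simp add: abs_kernel_def[abs_def] \<beta>_def mult.assoc)
qed

lemma left_integral_eq_abs_kernel:
  assumes "0 < y" "y < 1"
  shows "left_integral y = integral {0..y} (abs_kernel y)"
  unfolding left_integral_def
  by (rule integral_spike[of "{0, y}"]) (use assms in \<open>auto simp: abs_kernel_def abs_if\<close>)

lemma right_integral_eq_abs_kernel:
  assumes "0 < y" "y < 1"
  shows "right_integral y = integral {y..1} (abs_kernel y)"
  unfolding right_integral_def
  by (rule integral_spike[of "{y, 1}"]) (use assms in \<open>auto simp: abs_kernel_def abs_if\<close>)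

lemma left_integral_scaled:
  assumes "0 < y" "y < 1"
  shows "left_integral y = y powr (1 + p - \<mu>) *
    integral {0..1} (\<lambda>t. ((1 - t) powr (-\<mu>) * t powr p) * (1 - y * t) powr q)"
proof -
  define f where "f s = (y - s) powr (-\<mu>) * (s powr p * (1 - s) powr q)" for s
  have "f integrable_on {0..y}"
    using abs_kernel_integrable[OF assms]
    by (rule integrable_spike[where S = "{0, y}"]) (use assms in \<open>auto simp: abs_kernel_def f_def abs_if\<close>)
  then have "((\<lambda>t. f (y * t)) has_integral left_integral y / y) {0..1}"
    using has_integral_stretch_real[of f "left_integral y" 0 y y] assms
    by (simp add: left_integral_def f_def[abs_def] integrable_integral)
  moreover have "f (y * t) = y powr (p - \<mu>) * (((1 - t) powr (-\<mu>) * t powr p) * (1 - y * t) powr q)"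
    if "t \<in> {0..1}" for t
  proof -
    have "(y - y * t) powr (-\<mu>) = (y * (1 - t)) powr (-\<mu>)"
      by (simp add: algebra_simps)
    also have "\<dots> = y powr (-\<mu>) * (1 - t) powr (-\<mu>)"
      using that assms by (simp add: powr_mult)
    finally have "(y - y * t) powr (-\<mu>) = y powr (-\<mu>) * (1 - t) powr (-\<mu>)" .
    moreover have "(y * t) powr p = y powr p * t powr p"
      using that assms by (simp add: powr_mult)
    ultimately show ?thesis
      by (simp add: f_def powr_diff powr_minus divide_inverse algebra_simps)
  qed
  ultimately have "((\<lambda>t. y powr (p - \<mu>) * (((1 - t) powr (-\<mu>) * t powr p) * (1 - y * t) powr q))
      has_integral left_integral y / y) {0..1}"
    by (rule has_integral_eq[rotated])
  then have "y powr (p - \<mu>) * integral {0..1} (\<lambda>t. ((1 - t) powr (-\<mu>) * t powr p) * (1 - y * t) powr q)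
      = left_integral y / y"
    by (metis integral_mult_right integral_unique)
  then have "left_integral y = y * y powr (p - \<mu>) *
      integral {0..1} (\<lambda>t. ((1 - t) powr (-\<mu>) * t powr p) * (1 - y * t) powr q)"
    using assms by (simp add: field_simps)
  also have "y * y powr (p - \<mu>) = y powr (1 + p - \<mu>)"
    using assms by (simp add: powr_add flip: add_diff_eq)
  finally show ?thesis .
qed

lemma left_integral_differentiable:
  assumes "0 < x" "x < 1"
  shows "left_integral differentiable (at x)"
proof -
  define h where "h t = (1 - t) powr (-\<mu>) * t powr p" for t :: real
  define J where "J y = integral {0..1} (\<lambda>t. h t * (1 - y * t) powr q)" for y
  define J' where "J' = integral {0..1} (\<lambda>t. h t * (- q * t * (1 - x * t) powr (q - 1)))"
  have h_integrable: "h integrable_on {0..1}"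
    using beta_kernel_integrable[of p "-\<mu>"] p_gt mu_lt_1 by (simp add: h_def [abs_def] mult.commute)
  have pos: "0 < 1 - y * t" if "y < 1" "t \<in> {0..1}" for y t :: real
  proof (cases "y \<le> 0")
    case True
    then show ?thesis using that mult_nonpos_nonneg[of y t] by auto
  next
    case False
    then have "y * t \<le> y" using that mult_left_le[of t y] by auto
    then show ?thesis using that by simp
  qed
  have "(J has_real_derivative J') (at x)"
    unfolding J_def J'_def
  proof (rule has_real_derivative_weighted_integral[OF h_integrable _ open_lessThan])
    show "((\<lambda>y. (1 - y * t) powr q) has_real_derivative - q * t * (1 - y * t) powr (q - 1)) (at y)"
      if "y \<in> {..<1}" "t \<in> {0..1}" for y t
      using pos[of y t] that by (auto intro!: derivative_eq_intros simp: algebra_simps)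
    show "continuous_on ({..<1} \<times> {0..1}) (\<lambda>(y, t). - q * t * (1 - y * t) powr (q - 1))"
      using pos by (auto intro!: continuous_intros simp: case_prod_beta) fastforce
    show "continuous_on {0..1} (\<lambda>t. (1 - y * t) powr q)" if "y \<in> {..<1}" for y
      using pos that by (auto intro!: continuous_intros) fastforce
  qed (use assms in \<open>auto simp: h_def\<close>)
  then have "((\<lambda>y. y powr (1 + p - \<mu>) * J y) has_real_derivative
      (1 + p - \<mu>) * x powr (1 + p - \<mu> - 1) * J x + x powr (1 + p - \<mu>) * J') (at x)"
    using assms by (auto intro!: derivative_eq_intros)
  then have "(left_integral has_real_derivative
      (1 + p - \<mu>) * x powr (1 + p - \<mu> - 1) * J x + x powr (1 + p - \<mu>) * J') (at x)"
    by (rule has_field_derivative_transform_within_open[where S = "{0<..<1}"])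
       (use assms in \<open>auto simp: left_integral_scaled J_def h_def\<close>)
  then show ?thesis
    by (rule differentiableI[OF has_field_derivative_imp_has_derivative])
qed

end

section \<open>A logarithm cut along the negative imaginary axis\<close>

(* The branch of the logarithm with argument in (-\<pi>/2, 3\<pi>/2]: holomorphic off the
   negative imaginary axis, in particular near every nonzero point of the closed upper half plane. *)
definition Ln_up :: "complex \<Rightarrow> complex" where
  "Ln_up z = Ln (- \<i> * z) + \<i> * pi / 2"

lemma has_field_derivative_Ln_up:
  assumes "0 < Im z \<or> Re z \<noteq> 0"
  shows "(Ln_up has_field_derivative inverse z) (at z)"
proof -
  have "- \<i> * z \<notin> \<real>\<^sub>\<le>\<^sub>0" "z \<noteq> 0"
    using assms by (auto simp: complex_nonpos_Reals_iff)
  then have "((\<lambda>z. Ln (- \<i> * z) + \<i> * pi / 2) has_field_derivative inverse (- \<i> * z) * (- \<i>)) (at z)"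
    by (auto intro!: derivative_eq_intros)
  then show ?thesis
    using \<open>z \<noteq> 0\<close> by (simp add: Ln_up_def [abs_def] field_simps)
qed

lemma has_field_derivative_Ln_up_compose [derivative_intros]:
  "(f has_field_derivative f') (at z within S) \<Longrightarrow> 0 < Im (f z) \<or> Re (f z) \<noteq> 0 \<Longrightarrow>
   ((\<lambda>z. Ln_up (f z)) has_field_derivative inverse (f z) * f') (at z within S)"
  using DERIV_chain2[OF has_field_derivative_Ln_up] by blast

lemma exp_Ln_up: "z \<noteq> 0 \<Longrightarrow> exp (Ln_up z) = z"
  using exp_Ln[of \<i>] by (simp add: Ln_up_def exp_add exp_Ln algebra_simps)

lemma Re_Ln_up: "z \<noteq> 0 \<Longrightarrow> Re (Ln_up z) = ln (norm z)"
  by (simp add: Ln_up_def norm_mult)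

lemma Ln_up_of_real:
  assumes "t \<noteq> 0"
  shows "Ln_up (of_real t) = of_real (ln \<bar>t\<bar>) + (if t < 0 then \<i> * pi else 0)"
proof -
  have "0 < \<bar>t\<bar>"
    using assms by simp
  have rotate: "- \<i> * of_real t = of_real \<bar>t\<bar> * (if t < 0 then \<i> else - \<i>)"
    by auto
  have "Ln (of_real \<bar>t\<bar> * (if t < 0 then \<i> else - \<i>)) = Ln (of_real \<bar>t\<bar>) + Ln (if t < 0 then \<i> else - \<i>)"
    using \<open>0 < \<bar>t\<bar>\<close> by (intro Ln_times_of_real) auto
  then show ?thesis
    using \<open>0 < \<bar>t\<bar>\<close> unfolding Ln_up_def rotate Ln_of_real[OF \<open>0 < \<bar>t\<bar>\<close>] by auto
qed

lemma Ln_up_diff: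
  fixes c :: real
  assumes "0 \<le> Im w" "w \<noteq> 0" "w \<noteq> of_real c" "0 \<le> c"
  shows "Ln_up (w - of_real c) - Ln_up w = Ln (1 - of_real c / w)"
proof -
  define u where "u = - \<i> * w"
  define v where "v = - \<i> * (w - of_real c)"
  have "u \<noteq> 0" "v \<noteq> 0" "0 \<le> Re u" "0 \<le> Re v"
    using assms by (auto simp: u_def v_def)
  then have Im_Ln: "\<bar>Im (Ln u)\<bar> \<le> pi / 2" "\<bar>Im (Ln v)\<bar> \<le> pi / 2"
    using Re_Ln_pos_le by auto
  have "Ln (1 - of_real c / w) = Ln v - Ln u"
  proof (rule Ln_unique)
    show "exp (Ln v - Ln u) = 1 - of_real c / w"
      using \<open>u \<noteq> 0\<close> \<open>v \<noteq> 0\<close> assms(2) by (simp add: exp_diff u_def v_def field_simps)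
    show "Im (Ln v - Ln u) \<le> pi"
      using Im_Ln by simp
    show "- pi < Im (Ln v - Ln u)"
    proof (rule ccontr)
      assume "\<not> - pi < Im (Ln v - Ln u)"
      then have "Im (Ln u) = pi / 2" "Im (Ln v) = - (pi / 2)"
        using Im_Ln by auto
      then have "Im u = exp (Re (Ln u)) * sin (pi / 2)" "Im v = exp (Re (Ln v)) * sin (- (pi / 2))"
        by (metis Im_exp exp_Ln \<open>u \<noteq> 0\<close>, metis Im_exp exp_Ln \<open>v \<noteq> 0\<close>)
      then have "0 < Im u" "Im v < 0"
        by simp_all
      then show False
        using assms(4) by (simp add: u_def v_def)
    qed
  qed
  then show ?thesis
    by (simp add: Ln_up_def u_def v_def)
qed

lemma norm_le_norm_upshift:
  assumes "0 \<le> Im z" "0 \<le> e"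
  shows "norm z \<le> norm (z + \<i> * of_real e)"
proof -
  have "(Im z)\<^sup>2 \<le> (Im z + e)\<^sup>2"
    using assms by (intro power_mono) auto
  then show ?thesis
    by (simp add: cmod_def)
qed

lemma in_path_image_upper_half_circle:
  fixes R :: real
  assumes "0 \<le> R" "z \<in> path_image (part_circlepath 0 R 0 pi)"
  shows "0 \<le> Im z" "norm z = R"
  using assms sin_ge_zero by (auto simp: path_image_part_circlepath norm_mult Im_exp)

lemma half_disc_integral_eq:
  fixes f :: "complex \<Rightarrow> complex" and R :: real
  assumes holo: "f holomorphic_on H" and "open H" "convex H" "0 < R"
    and upper: "\<And>z. 0 \<le> Im z \<Longrightarrow> z \<in> H"
  shows "f contour_integrable_on part_circlepath 0 R 0 pi"
    and "integral {-R..R} (\<lambda>t. f t) + contour_integral (part_circlepath 0 R 0 pi) f = 0"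
proof -
  define diameter where "diameter = linepath (- of_real R) (of_real R :: complex)"
  define arc where "arc = part_circlepath 0 R 0 pi"
  have diameter_in_H: "path_image diameter \<subseteq> H"
    unfolding diameter_def path_image_linepath
    by (intro closed_segment_subset \<open>convex H\<close> upper) auto
  have arc_in_H: "path_image arc \<subseteq> H"
    using in_path_image_upper_half_circle[of R] assms(4) upper by (auto simp: arc_def)
  show "f contour_integrable_on part_circlepath 0 R 0 pi"
    using contour_integrable_holomorphic_simple[OF holo \<open>open H\<close> _ arc_in_H] by (simp add: arc_def)
  then have "(f has_contour_integral contour_integral arc f) arc"
    by (simp add: arc_def has_contour_integral_integral)
  moreover have "(f has_contour_integral integral {-R..R} (\<lambda>t. f t)) diameter"
  proof -
    have "f contour_integrable_on diameter"
      using contour_integrable_holomorphic_simple[OF holo \<open>open H\<close> _ diameter_in_H]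
      by (simp add: diameter_def)
    then show ?thesis
      using assms(4) has_contour_integral_linepath_Reals_iff[of "- of_real R" "of_real R" f]
      by (auto simp: diameter_def contour_integrable_on_def integral_unique)
  qed
  moreover have "(f has_contour_integral 0) (diameter +++ arc)"
    using diameter_in_H arc_in_H assms(4)
    by (intro Cauchy_theorem_convex_simple[OF holo \<open>convex H\<close>])
       (auto simp: arc_def diameter_def path_image_join)
  ultimately show "integral {-R..R} (\<lambda>t. f t) + contour_integral (part_circlepath 0 R 0 pi) f = 0"
    using has_contour_integral_join has_contour_integral_unique
    by (metis arc_def diameter_def valid_path_linepath valid_path_part_circlepath)
qed

section \<open>Contour integration of a branch of the kernel\<close>

locale frac_kernel_at = frac_kernel +
  fixes x :: real
  assumes x_pos: "0 < x" and x_lt_1: "x < 1"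
begin

definition kernel_branch :: "complex \<Rightarrow> complex" where
  "kernel_branch z = exp (p * Ln_up z - \<mu> * Ln_up (z - of_real x) + q * Ln_up (z - 1))"

lemma norm_kernel_branch:
  fixes z :: complex
  assumes "z \<noteq> 0" "z \<noteq> x" "z \<noteq> 1"
  shows "norm (kernel_branch z) = norm z powr p * norm (z - x) powr (-\<mu>) * norm (z - 1) powr q"
proof -
  have "norm (kernel_branch z) = exp (p * ln (norm z) - \<mu> * ln (norm (z - x)) + q * ln (norm (z - 1)))"
    using assms by (simp add: kernel_branch_def norm_exp_eq_Re Re_Ln_up)
  also have "\<dots> = norm z powr p * norm (z - x) powr (-\<mu>) * norm (z - 1) powr q"
    using assms by (simp add: powr_def exp_add exp_diff exp_minus divide_inverse)
  finally show ?thesis .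
qed

lemma norm_kernel_branch_shift_le:
  fixes t e :: real
  assumes "t \<noteq> 0" "t \<noteq> x" "t \<noteq> 1" "0 \<le> e"
  shows "norm (kernel_branch (t + \<i> * e)) \<le> abs_kernel x t"
proof -
  define z where "z = t + \<i> * e"
  have dist_le: "\<bar>t - a\<bar> \<le> norm (z - a)" for a :: real
  proof -
    have "z - a = Complex (t - a) e" by (simp add: z_def complex_eq_iff)
    then show ?thesis by (simp add: cmod_def real_sqrt_ge_abs1)
  qed
  have "z \<noteq> of_real a" if "t \<noteq> a" for a
  proof
    assume "z = of_real a"
    then have "\<bar>t - a\<bar> \<le> 0" using dist_le[of a] by simp
    with that show False by simp
  qed
  then have "z \<noteq> 0" "z \<noteq> x" "z \<noteq> 1"
    using assms by (metis of_real_0, blast, metis of_real_1)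
  then have "norm (kernel_branch z) = norm z powr p * norm (z - x) powr (-\<mu>) * norm (z - 1) powr q"
    by (rule norm_kernel_branch)
  also have "\<dots> \<le> \<bar>t\<bar> powr p * \<bar>t - x\<bar> powr (-\<mu>) * \<bar>t - 1\<bar> powr q"
    using dist_le[of 0] dist_le[of x] dist_le[of 1] assms p_neg q_neg mu_pos
    by (intro mult_mono powr_mono2') auto
  finally show ?thesis
    by (simp add: z_def abs_kernel_def)
qed

lemma Im_kernel_branch_of_real:
  fixes t :: real
  assumes "t \<noteq> 0" "t \<noteq> x" "t \<noteq> 1"
  shows "Im (kernel_branch t) =
    (if 0 < t \<and> t < x then sin (pi * p) * abs_kernel x t
     else if x < t \<and> t < 1 then sin (pi * q) * abs_kernel x t else 0)"
proof -
  define m where "m = (if t < 0 then p else 0) - (if t < x then \<mu> else 0) + (if t < 1 then q else 0)"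
  have "kernel_branch t = exp (ln (abs_kernel x t) + \<i> * (pi * m))"
    using assms Ln_up_of_real[of t] Ln_up_of_real[of "t - x"] Ln_up_of_real[of "t - 1"]
    by (simp add: kernel_branch_def abs_kernel_def m_def ln_mult powr_def algebra_simps)
  then have "Im (kernel_branch t) = abs_kernel x t * sin (pi * m)"
    using assms by (simp add: Im_exp abs_kernel_def)
  moreover have "sin (pi * m) = (if 0 < t \<and> t < x then sin (pi * p) else if x < t \<and> t < 1 then sin (pi * q) else 0)"
  proof -
    consider "t < 0" | "0 < t" "t < x" | "x < t" "t < 1" | "1 < t"
      using assms by linarith
    then show ?thesis
    proof cases
      case 1
      then have "m = -1" using x_pos x_lt_1 exponent_sum by (simp add: m_def)
      then show ?thesis using 1 x_pos by simp
    next
      case 2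
      then have "m = -1 - p" using x_lt_1 exponent_sum by (simp add: m_def)
      then have "pi * m = - (pi * p) - pi" by (simp add: right_diff_distrib)
      then show ?thesis using 2 by (simp add: sin_diff)
    qed (use x_pos x_lt_1 in \<open>simp_all add: m_def\<close>)
  qed
  ultimately show ?thesis by (simp add: mult.commute)
qed

lemma kernel_branch_field_differentiable:
  assumes "0 < Im z \<or> Re z \<notin> {0, x, 1}"
  shows "kernel_branch field_differentiable (at z)"
proof -
  have off_cut: "0 < Im z \<or> Re z \<noteq> 0" "0 < Im (z - of_real x) \<or> Re (z - of_real x) \<noteq> 0"
    "0 < Im (z - 1) \<or> Re (z - 1) \<noteq> 0"
    using assms by auto
  show ?thesis
    unfolding field_differentiable_def kernel_branch_def [abs_def]
    by (intro exI) (rule derivative_eq_intros refl off_cut | simp)+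
qed

(* The exponent of Ln_up w cancels because p + q = \<mu> - 1. *)
lemma kernel_branch_mult_eq:
  fixes w :: complex
  assumes "0 \<le> Im w" "w \<noteq> 0" "w \<noteq> x" "w \<noteq> 1"
  shows "w * kernel_branch w = exp (- \<mu> * Ln (1 - x / w) + q * Ln (1 - 1 / w))"
proof -
  have Ln_up_x: "Ln_up (w - of_real x) = Ln_up w + Ln (1 - of_real x / w)"
    using Ln_up_diff[of w x] assms x_pos by (simp add: algebra_simps)
  have Ln_up_1: "Ln_up (w - 1) = Ln_up w + Ln (1 - 1 / w)"
    using Ln_up_diff[of w 1] assms by (simp add: algebra_simps)
  have "1 + p + q - \<mu> = 0"
    using exponent_sum by simp
  then have exponent: "(1 + of_real p + of_real q - of_real \<mu> :: complex) = 0"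
    by (metis of_real_0 of_real_1 of_real_add of_real_diff)
  have "w * kernel_branch w = exp (Ln_up w) * kernel_branch w"
    using exp_Ln_up assms(2) by simp
  also have "\<dots> = exp (Ln_up w + (p * Ln_up w - \<mu> * Ln_up (w - of_real x) + q * Ln_up (w - 1)))"
    by (simp add: kernel_branch_def exp_add)
  also have "Ln_up w + (p * Ln_up w - \<mu> * Ln_up (w - of_real x) + q * Ln_up (w - 1))
      = (1 + of_real p + of_real q - of_real \<mu>) * Ln_up w - \<mu> * Ln (1 - x / w) + q * Ln (1 - 1 / w)"
    unfolding Ln_up_x Ln_up_1 by (simp add: algebra_simps)
  finally show ?thesis
    unfolding exponent by simp
qed

lemma kernel_branch_asymptotic:
  assumes "0 < \<eta>"
  shows "\<exists>R>0. \<forall>w. 0 \<le> Im w \<longrightarrow> R \<le> norm w \<longrightarrow> norm (w * kernel_branch w - 1) \<le> \<eta>"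
proof -
  define \<Phi> where "\<Phi> u = exp (- \<mu> * Ln (1 - x * u) + q * Ln (1 - u))" for u :: complex
  have "isCont \<Phi> 0"
    unfolding \<Phi>_def by (intro continuous_intros) (auto simp: complex_nonpos_Reals_iff)
  then have "\<forall>\<^sub>F u in at 0. dist (\<Phi> u) 1 < \<eta>"
    using assms by (simp add: isCont_def \<Phi>_def tendsto_iff)
  then obtain d where d: "0 < d" "\<And>u. u \<noteq> 0 \<Longrightarrow> norm u < d \<Longrightarrow> dist (\<Phi> u) 1 < \<eta>"
    by (auto simp: eventually_at)
  have "norm (w * kernel_branch w - 1) \<le> \<eta>" if w: "0 \<le> Im w" "max 2 (2 / d) \<le> norm w" for w
  proof -
    have "w \<noteq> 0" "w \<noteq> x" "w \<noteq> 1"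
      using w x_pos x_lt_1 by auto
    moreover have "norm (inverse w) < d"
    proof -
      have "2 \<le> d * norm w" "0 < norm w"
        using w d(1) by (auto simp: field_simps)
      then have "inverse (norm w) < d"
        by (simp add: field_simps)
      then show ?thesis
        by (simp add: norm_inverse)
    qed
    ultimately have "dist (\<Phi> (inverse w)) 1 < \<eta>"
      using d(2) by simp
    then show ?thesis
      using kernel_branch_mult_eq[OF w(1) \<open>w \<noteq> 0\<close> \<open>w \<noteq> x\<close> \<open>w \<noteq> 1\<close>]
      by (simp add: \<Phi>_def dist_norm divide_inverse)
  qed
  then show ?thesis
    by (intro exI[of _ "max 2 (2 / d)"]) auto
qed

lemma kernel_branch_shift_holomorphic:
  assumes "0 < e"
  shows "(\<lambda>z. kernel_branch (z + \<i> * of_real e)) holomorphic_on {z. - e < Im z}"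
proof -
  have "(\<lambda>z. kernel_branch (z + \<i> * of_real e)) field_differentiable (at z)" if "- e < Im z" for z
  proof -
    have "kernel_branch field_differentiable (at (z + \<i> * of_real e))"
      using that by (intro kernel_branch_field_differentiable) simp
    then show ?thesis
      using field_differentiable_compose[of "\<lambda>z. z + \<i> * of_real e" z kernel_branch]
        field_differentiable_add[OF field_differentiable_ident field_differentiable_const]
      by (auto simp: o_def)
  qed
  then show ?thesis
    by (auto simp: holomorphic_on_def field_differentiable_at_within)
qed

lemma norm_kernel_branch_sub_inverse_le:
  assumes "0 < R" "0 \<le> \<eta>" "0 \<le> Im w" "R \<le> norm w"
    and far: "\<And>w. 0 \<le> Im w \<Longrightarrow> R \<le> norm w \<Longrightarrow> norm (w * kernel_branch w - 1) \<le> \<eta>"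
  shows "norm (kernel_branch w - inverse w) \<le> \<eta> / R"
proof -
  have "w \<noteq> 0"
    using assms(1,4) by auto
  then have "norm (kernel_branch w - inverse w) = norm (w * kernel_branch w - 1) / norm w"
    by (simp flip: norm_divide) (simp add: field_simps)
  also have "\<dots> \<le> \<eta> / norm w"
    using far[OF assms(3,4)] by (simp add: divide_right_mono)
  also have "\<dots> \<le> \<eta> / R"
    using assms(1,2,4) by (intro divide_left_mono mult_pos_pos) auto
  finally show ?thesis .
qed

(* On the arc the integrand is compared with 1/(z + i e), whose primitive is Ln_up (z + i e). *)
lemma semicircle_estimate:
  fixes R \<eta> e :: real
  assumes "0 < R" "0 \<le> \<eta>" "0 < e"
    and far: "\<And>w. 0 \<le> Im w \<Longrightarrow> R \<le> norm w \<Longrightarrow> norm (w * kernel_branch w - 1) \<le> \<eta>"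
  shows "norm (integral {-R..R} (\<lambda>t. kernel_branch (t + \<i> * e))
           + (Ln_up (- R + \<i> * e) - Ln_up (R + \<i> * e))) \<le> pi * \<eta>"
proof -
  define f where "f z = kernel_branch (z + \<i> * of_real e)" for z
  define H where "H = {z. - e < Im z}"
  define arc where "arc = part_circlepath 0 R 0 pi"
  have "f holomorphic_on H"
    using kernel_branch_shift_holomorphic[OF assms(3)] by (simp add: f_def [abs_def] H_def)
  then have "f contour_integrable_on arc" and arc_diameter: "integral {-R..R} (\<lambda>t. f t) + contour_integral arc f = 0"
    using assms(1,3) half_disc_integral_eq[of f H R]
    by (auto simp: H_def arc_def open_halfspace_Im_gt convex_halfspace_Im_gt)
  have arc_in_H: "path_image arc \<subseteq> H"
    using in_path_image_upper_half_circle[of R] assms(1,3) by (force simp: arc_def H_def)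
  have "((\<lambda>z. Ln_up (z + \<i> * of_real e)) has_field_derivative inverse (z + \<i> * of_real e))
      (at z within H)" if "z \<in> H" for z
    using that by (auto intro!: derivative_eq_intros simp: H_def)
  from contour_integral_primitive[OF this _ arc_in_H]
  have "((\<lambda>z. inverse (z + \<i> * of_real e)) has_contour_integral
      Ln_up (- R + \<i> * e) - Ln_up (R + \<i> * e)) arc"
    by (simp add: arc_def)
  from has_contour_integral_diff[OF has_contour_integral_integral[OF \<open>f contour_integrable_on arc\<close>] this]
  have "norm (contour_integral arc f - (Ln_up (- R + \<i> * e) - Ln_up (R + \<i> * e))) \<le> \<eta> / R * R * (pi - 0)"
    unfolding arc_def
  proof (rule has_contour_integral_bound_part_circlepath)
    fix z assume "z \<in> path_image (part_circlepath 0 R 0 pi)"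
    then have "0 \<le> Im (z + \<i> * of_real e)" "R \<le> norm (z + \<i> * of_real e)"
      using in_path_image_upper_half_circle[of R z] norm_le_norm_upshift[of z e] assms(1,3) by auto
    then show "norm (f z - inverse (z + \<i> * of_real e)) \<le> \<eta> / R"
      unfolding f_def by (rule norm_kernel_branch_sub_inverse_le[OF assms(1,2) _ _ far])
  qed (use assms in auto)
  moreover have "integral {-R..R} (\<lambda>t. f t) + (Ln_up (- R + \<i> * e) - Ln_up (R + \<i> * e))
      = - (contour_integral arc f - (Ln_up (- R + \<i> * e) - Ln_up (R + \<i> * e)))"
    using arc_diameter by (simp add: algebra_simps)
  ultimately show ?thesis
    using assms(1) by (simp add: f_def norm_minus_commute mult.commute)
qed

lemma kernel_branch_shift_limit:
  fixes L U :: real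
  defines "e \<equiv> \<lambda>n. inverse (real (Suc n))"
  shows "(\<lambda>t. kernel_branch t) integrable_on {L..U}"
    and "(\<lambda>n. integral {L..U} (\<lambda>t. kernel_branch (t + \<i> * e n)))
           \<longlonglongrightarrow> integral {L..U} (\<lambda>t. kernel_branch t)"
proof -
  define S where "S = {L..U} - {0, x, 1}"
  have "0 < e n" for n
    by (simp add: e_def)
  have spike: "negligible {t \<in> {L..U} - S. f t \<noteq> 0}" "negligible {t \<in> S - {L..U}. f t \<noteq> 0}"
    for f :: "real \<Rightarrow> 'a::real_normed_vector"
    by (rule negligible_subset[of "{0, x, 1}"]; auto simp: S_def)+
  have "continuous_on {L..U} (\<lambda>t. kernel_branch (t + \<i> * e n))" for n
    using holomorphic_on_imp_continuous_on[OF kernel_branch_shift_holomorphic[OF \<open>0 < e n\<close>]]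
    by (rule continuous_on_compose2[where f = of_real]) (use \<open>0 < e n\<close> in \<open>auto intro: continuous_intros\<close>)
  then have shift_integrable: "(\<lambda>t. kernel_branch (t + \<i> * e n)) integrable_on S" for n
    by (rule integrable_spike_set[OF integrable_continuous_interval]) (rule spike)+
  have dominant_integrable: "abs_kernel x integrable_on S"
    by (rule integrable_spike_set[OF abs_kernel_integrable[OF x_pos x_lt_1]]) (rule spike)+
  have dominated: "norm (kernel_branch (t + \<i> * e n)) \<le> abs_kernel x t" if "t \<in> S" for n t
    using that \<open>0 < e n\<close> by (intro norm_kernel_branch_shift_le) (auto simp: S_def)
  have pointwise: "(\<lambda>n. kernel_branch (t + \<i> * e n)) \<longlonglongrightarrow> kernel_branch t" if "t \<in> S" for t
  proof -
    have "(\<lambda>n. t + \<i> * e n) \<longlonglongrightarrow> (t + \<i> * of_real 0 :: complex)"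
      unfolding e_def by (intro tendsto_intros LIMSEQ_inverse_real_of_nat)
    moreover have "isCont kernel_branch t"
      using that by (intro field_differentiable_imp_continuous_at kernel_branch_field_differentiable)
        (auto simp: S_def)
    ultimately show ?thesis
      using isCont_tendsto_compose by fastforce
  qed
  have limit: "(\<lambda>t. kernel_branch t) integrable_on S"
    "(\<lambda>n. integral S (\<lambda>t. kernel_branch (t + \<i> * e n))) \<longlonglongrightarrow> integral S (\<lambda>t. kernel_branch t)"
    using dominated_convergence[of "\<lambda>n t. kernel_branch (t + \<i> * e n)" S "abs_kernel x"]
      shift_integrable dominant_integrable dominated pointwise by auto
  from limit(1) show "(\<lambda>t. kernel_branch t) integrable_on {L..U}"
    by (rule integrable_spike_set) (rule spike)+
  have "integral S f = integral {L..U} f" for f :: "real \<Rightarrow> complex"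
    by (rule integral_spike_set) (rule spike)+
  with limit(2) show "(\<lambda>n. integral {L..U} (\<lambda>t. kernel_branch (t + \<i> * e n)))
      \<longlonglongrightarrow> integral {L..U} (\<lambda>t. kernel_branch t)"
    by simp
qed

lemma real_line_estimate:
  fixes R \<eta> :: real
  assumes "0 < R" "0 \<le> \<eta>"
    and "\<And>w. 0 \<le> Im w \<Longrightarrow> R \<le> norm w \<Longrightarrow> norm (w * kernel_branch w - 1) \<le> \<eta>"
  shows "norm (integral {-R..R} (\<lambda>t. kernel_branch t) + \<i> * pi) \<le> pi * \<eta>"
proof -
  define e where "e n = inverse (real (Suc n))" for n
  have "(\<lambda>n. a + \<i> * e n) \<longlonglongrightarrow> (a + \<i> * of_real 0 :: complex)" for a :: complex
    unfolding e_def by (intro tendsto_intros LIMSEQ_inverse_real_of_nat)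
  moreover have "isCont Ln_up (of_real a)" if "a \<noteq> 0" for a :: real
    by (rule DERIV_isCont[OF has_field_derivative_Ln_up]) (use that in simp)
  ultimately have Ln_up_limit: "(\<lambda>n. Ln_up (of_real a + \<i> * e n)) \<longlonglongrightarrow> Ln_up (of_real a)"
    if "a \<noteq> 0" for a :: real
    using that isCont_tendsto_compose by fastforce
  have "(\<lambda>n. integral {-R..R} (\<lambda>t. kernel_branch (t + \<i> * e n))
      + (Ln_up (- R + \<i> * e n) - Ln_up (R + \<i> * e n)))
      \<longlonglongrightarrow> integral {-R..R} (\<lambda>t. kernel_branch t) + (Ln_up (- R) - Ln_up R)"
    using tendsto_add[OF kernel_branch_shift_limit(2)[of "- R" R, folded e_def]
        tendsto_diff[OF Ln_up_limit[of "- R"] Ln_up_limit[of R]]] assms(1)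
    by simp
  moreover have "norm (integral {-R..R} (\<lambda>t. kernel_branch (t + \<i> * e n))
      + (Ln_up (- R + \<i> * e n) - Ln_up (R + \<i> * e n))) \<le> pi * \<eta>" for n
    using assms by (intro semicircle_estimate) (auto simp: e_def)
  ultimately have "norm (integral {-R..R} (\<lambda>t. kernel_branch t) + (Ln_up (- R) - Ln_up R)) \<le> pi * \<eta>"
    by (intro Lim_norm_ubound[OF trivial_limit_sequentially]) auto
  moreover have "Ln_up (- R) - Ln_up R = \<i> * pi"
    using assms(1) Ln_up_of_real[of "- R"] Ln_up_of_real[of R] by simp
  ultimately show ?thesis
    by simp
qed

lemma Im_integral_kernel_branch:
  fixes R :: real
  assumes "1 \<le> R"
  shows "Im (integral {-R..R} (\<lambda>t. kernel_branch t)) =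
    sin (pi * p) * integral {0..x} (abs_kernel x) + sin (pi * q) * integral {x..1} (abs_kernel x)"
proof -
  define g where "g = (\<lambda>t::real. Im (kernel_branch t))"
  have "g integrable_on {-R..R}" and Im_integral: "Im (integral {-R..R} (\<lambda>t. kernel_branch t)) = integral {-R..R} g"
    using integrable_linear[OF kernel_branch_shift_limit(1) bounded_linear_Im]
      integral_linear[OF kernel_branch_shift_limit(1) bounded_linear_Im]
    by (simp_all add: g_def o_def)
  then have "integral {-R..0} g + (integral {0..x} g + (integral {x..1} g + integral {1..R} g)) = integral {-R..R} g"
    using assms x_pos x_lt_1 integrable_subinterval_real[OF \<open>g integrable_on {-R..R}\<close>]
    by (simp add: Henstock_Kurzweil_Integration.integral_combine)
  have g_eq: "g t = (if 0 < t \<and> t < x then sin (pi * p) * abs_kernel x t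
      else if x < t \<and> t < 1 then sin (pi * q) * abs_kernel x t else 0)" if "t \<notin> {0, x, 1}" for t
    using that Im_kernel_branch_of_real[of t] by (simp add: g_def)
  have "integral {-R..0} g = integral {-R..0} (\<lambda>t. 0)"
    by (rule integral_spike[of "{0}"]) (use x_pos in \<open>auto simp: g_eq\<close>)
  moreover have "integral {1..R} g = integral {1..R} (\<lambda>t. 0)"
    by (rule integral_spike[of "{1}"]) (use x_lt_1 in \<open>auto simp: g_eq\<close>)
  moreover have "integral {0..x} g = integral {0..x} (\<lambda>t. sin (pi * p) * abs_kernel x t)"
    by (rule integral_spike[of "{0, x}"]) (use x_lt_1 in \<open>auto simp: g_eq\<close>)
  moreover have "integral {x..1} g = integral {x..1} (\<lambda>t. sin (pi * q) * abs_kernel x t)"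
    by (rule integral_spike[of "{x, 1}"]) (use x_pos in \<open>auto simp: g_eq\<close>)
  ultimately show ?thesis
    using Im_integral \<open>integral {-R..0} g + _ = _\<close> by simp
qed

lemma sin_integral_identity:
  "sin (pi * p) * integral {0..x} (abs_kernel x) + sin (pi * q) * integral {x..1} (abs_kernel x) = - pi"
proof -
  define S where
    "S = sin (pi * p) * integral {0..x} (abs_kernel x) + sin (pi * q) * integral {x..1} (abs_kernel x)"
  have bound: "\<bar>S + pi\<bar> \<le> pi * \<eta>" if \<eta>: "0 < \<eta>" for \<eta>
  proof -
    obtain R0 where R0: "0 < R0"
      "\<And>w. 0 \<le> Im w \<Longrightarrow> R0 \<le> norm w \<Longrightarrow> norm (w * kernel_branch w - 1) \<le> \<eta>"
      using kernel_branch_asymptotic[OF \<eta>] by blast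
    define R where "R = max 1 R0"
    have "norm (integral {-R..R} (\<lambda>t. kernel_branch t) + \<i> * pi) \<le> pi * \<eta>"
      using R0 \<eta> by (intro real_line_estimate) (auto simp: R_def)
    moreover have "Im (integral {-R..R} (\<lambda>t. kernel_branch t) + \<i> * pi) = S + pi"
      using Im_integral_kernel_branch[of R] by (simp add: R_def S_def)
    ultimately show ?thesis
      using abs_Im_le_cmod by (metis order_trans)
  qed
  have "\<bar>S + pi\<bar> \<le> 0"
  proof (rule field_le_epsilon)
    fix e :: real assume "0 < e"
    then show "\<bar>S + pi\<bar> \<le> 0 + e"
      using bound[of "e / pi"] by simp
  qed
  then show ?thesis
    by (simp add: S_def)
qed

end

section \<open>The kernel of the operator\<close>

lemma sin_pi_mult_neg:
  fixes q :: real
  assumes "-1 < q" "q < 0"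
  shows "sin (pi * q) < 0"
proof -
  have "pi * (- q) < pi * 1"
    using assms by (intro mult_strict_left_mono) auto
  then have "0 < sin (pi * (- q))"
    using assms by (intro sin_gt_zero) (auto simp: mult_pos_neg)
  then show ?thesis
    by simp
qed

lemma sin_balance_imp_neg:
  fixes p q r :: real
  assumes "-1 < q" "p + q < 0" "0 < r" "r < 1"
    and "r * sin (pi * q) = (1 - r) * sin (pi * p)"
  shows "p < 0"
proof (rule ccontr)
  assume "\<not> p < 0"
  then have "0 \<le> sin (pi * p)"
    using assms(1,2) by (intro sin_ge_zero) (auto simp: mult_le_cancel_left1)
  moreover have "sin (pi * q) < 0"
    using assms(1,2) \<open>\<not> p < 0\<close> by (intro sin_pi_mult_neg) auto
  ultimately show False
    using assms(3-5) mult_pos_neg[of r "sin (pi * q)"] mult_nonneg_nonneg[of "1 - r" "sin (pi * p)"]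
    by linarith
qed

lemma deriv_integral_eq:
  fixes f :: "real \<Rightarrow> real"
  assumes "f integrable_on {a..b}" "s \<in> {a<..<b}" "isCont f s"
  shows "deriv (\<lambda>u. integral {a..u} f) s = f s"
proof -
  have "((\<lambda>u. integral {a..u} f) has_vector_derivative f s) (at s within {a..b})"
    using assms integral_has_vector_derivative_continuous_at[of f a b s "{}"]
    by (auto intro: continuous_at_imp_continuous_within)
  moreover have "at s within {a..b} = at s"
    using assms(2) by (intro at_within_interior) auto
  ultimately show ?thesis
    by (simp add: has_real_derivative_iff_has_vector_derivative DERIV_imp_deriv)
qed

lemma frac_int_cong:
  assumes "\<And>s. s \<in> {0<..<1} \<Longrightarrow> u s = v s" "y \<in> {0<..1}"
  shows "frac_int \<sigma> u y = frac_int \<sigma> v y"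
  unfolding frac_int_def
  by (rule arg_cong[where f = "(*) _"], rule integral_spike[of "{0, 1}"]) (use assms in auto)

lemma frac_int_star_cong:
  assumes "\<And>s. s \<in> {0<..<1} \<Longrightarrow> u s = v s" "y \<in> {0..<1}"
  shows "frac_int_star \<sigma> u y = frac_int_star \<sigma> v y"
  unfolding frac_int_star_def
  by (rule arg_cong[where f = "(*) _"], rule integral_spike[of "{0, 1}"]) (use assms in auto)

lemma frac_L_eq_0I:
  assumes "(frac_int (2 - \<alpha>) (deriv u) has_real_derivative a) (at x)"
    and "(frac_int_star (2 - \<alpha>) (deriv u) has_real_derivative b) (at x)"
    and "r * a + (1 - r) * b = 0"
  shows "frac_int (2 - \<alpha>) (deriv u) differentiable (at x) \<and>
    frac_int_star (2 - \<alpha>) (deriv u) differentiable (at x) \<and> frac_L r \<alpha> u x = 0"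
  using assms differentiableI[OF has_field_derivative_imp_has_derivative]
  by (auto simp: frac_L_def frac_D_def frac_D_star_def DERIV_imp_deriv)

context frac_kernel
begin

lemma sin_left_plus_sin_right:
  assumes "0 < y" "y < 1"
  shows "sin (pi * p) * left_integral y + sin (pi * q) * right_integral y = - pi"
proof -
  interpret frac_kernel_at \<mu> p q y
    using frac_kernel_axioms assms by (simp add: frac_kernel_at_def frac_kernel_at_axioms_def)
  show ?thesis
    using sin_integral_identity assms by (simp add: left_integral_eq_abs_kernel right_integral_eq_abs_kernel)
qed

lemma right_integral_has_derivative:
  assumes "0 < x" "x < 1" "(left_integral has_real_derivative A') (at x)"
  shows "(right_integral has_real_derivative - sin (pi * p) / sin (pi * q) * A') (at x)"
proof -
  have "sin (pi * q) < 0"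
    using q_gt q_neg by (rule sin_pi_mult_neg)
  have "((\<lambda>y. (- pi - sin (pi * p) * left_integral y) / sin (pi * q)) has_real_derivative
      - sin (pi * p) / sin (pi * q) * A') (at x)"
    using assms(3) \<open>sin (pi * q) < 0\<close> by (auto intro!: derivative_eq_intros)
  then show ?thesis
  proof (rule has_field_derivative_transform_within_open[where S = "{0<..<1}"])
    show "(- pi - sin (pi * p) * left_integral y) / sin (pi * q) = right_integral y"
      if "y \<in> {0<..<1}" for y
      using sin_left_plus_sin_right[of y] that \<open>sin (pi * q) < 0\<close> by (simp add: field_simps)
  qed (use assms in auto)
qed

lemma frac_ints_deriv_kernel_integral:
  fixes K :: "real \<Rightarrow> real"
  assumes "K = (\<lambda>x. integral {0..x} (\<lambda>s. s powr p * (1 - s) powr q))" "y \<in> {0<..<1}"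
  shows "frac_int (1 - \<mu>) (deriv K) y = left_integral y / Gamma (1 - \<mu>)"
    and "frac_int_star (1 - \<mu>) (deriv K) y = right_integral y / Gamma (1 - \<mu>)"
proof -
  have "deriv K s = s powr p * (1 - s) powr q" if "s \<in> {0<..<1}" for s
    using assms(1) that beta_kernel_integrable[OF p_gt q_gt]
    by (simp add: deriv_integral_eq continuous_intros)
  then have "frac_int (1 - \<mu>) (deriv K) y = frac_int (1 - \<mu>) (\<lambda>s. s powr p * (1 - s) powr q) y"
    and "frac_int_star (1 - \<mu>) (deriv K) y = frac_int_star (1 - \<mu>) (\<lambda>s. s powr p * (1 - s) powr q) y"
    using assms(2) by (auto intro: frac_int_cong frac_int_star_cong)
  then show "frac_int (1 - \<mu>) (deriv K) y = left_integral y / Gamma (1 - \<mu>)"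
    and "frac_int_star (1 - \<mu>) (deriv K) y = right_integral y / Gamma (1 - \<mu>)"
    by (simp_all add: frac_int_def frac_int_star_def left_integral_def right_integral_def)
qed

lemma frac_ints_deriv_kernel_integral_has_derivative:
  fixes K :: "real \<Rightarrow> real"
  assumes "K = (\<lambda>x. integral {0..x} (\<lambda>s. s powr p * (1 - s) powr q))" "x \<in> {0<..<1}"
  obtains D where "(frac_int (1 - \<mu>) (deriv K) has_real_derivative D) (at x)"
    and "(frac_int_star (1 - \<mu>) (deriv K) has_real_derivative - sin (pi * p) / sin (pi * q) * D) (at x)"
proof -
  define A' where "A' = deriv left_integral x"
  have A': "(left_integral has_real_derivative A') (at x)"
    using assms(2) left_integral_differentiable by (simp add: A'_def DERIV_deriv_iff_real_differentiable)
  have "((\<lambda>y. left_integral y / Gamma (1 - \<mu>)) has_real_derivative A' / Gamma (1 - \<mu>)) (at x)"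
    using A' by (rule DERIV_cdivide)
  moreover have "((\<lambda>y. right_integral y / Gamma (1 - \<mu>)) has_real_derivative
      - sin (pi * p) / sin (pi * q) * A' / Gamma (1 - \<mu>)) (at x)"
    by (rule DERIV_cdivide[OF right_integral_has_derivative]) (use assms(2) A' in auto)
  ultimately have "(frac_int (1 - \<mu>) (deriv K) has_real_derivative A' / Gamma (1 - \<mu>)) (at x)"
    "(frac_int_star (1 - \<mu>) (deriv K) has_real_derivative
      - sin (pi * p) / sin (pi * q) * A' / Gamma (1 - \<mu>)) (at x)"
    using assms frac_ints_deriv_kernel_integral
    by (auto elim!: has_field_derivative_transform_within_open[where S = "{0<..<1}"])
  then show thesis
    by (intro that[of "A' / Gamma (1 - \<mu>)"]) simp_all
qed

end

lemma frac_kernel_if_sine_balance: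
  fixes \<mu> p q r :: real
  assumes "0 < \<mu>" "\<mu> < 1" "0 < r" "r < 1"
    and "(\<lambda>s. s powr p * (1 - s) powr q) integrable_on {0..1}"
    and "p + q = \<mu> - 1" "r * sin (pi * q) = (1 - r) * sin (pi * p)"
  shows "frac_kernel \<mu> p q"
proof
  show "-1 < p" "-1 < q"
    using beta_kernel_integrable_imp_exponents[OF assms(5)] by auto
  then show "p < 0" "q < 0"
    using assms sin_balance_imp_neg[of q p r] sin_balance_imp_neg[of p q "1 - r"] by auto
qed (use assms in auto)

theorem lemma4p3:
  fixes \<alpha> r p q :: real and K :: "real \<Rightarrow> real"
  assumes "1 < \<alpha>" "\<alpha> < 2" "0 < r" "r < 1"
    and "(\<lambda>x. x powr p * (1 - x) powr q) integrable_on {0..1}"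
    and "K = (\<lambda>x. integral {0..x} (\<lambda>s. s powr p * (1 - s) powr q))"
    and "3 - \<alpha> + p + q = 1"
    and "r * sin (pi * (- q)) = (1 - r) * sin (pi * (- p))"
  shows "\<forall>x\<in>{0<..<1}.
           frac_int (2 - \<alpha>) (deriv K) differentiable (at x) \<and>
           frac_int_star (2 - \<alpha>) (deriv K) differentiable (at x) \<and>
           frac_L r \<alpha> K x = 0"
proof
  fix x :: real assume x: "x \<in> {0<..<1}"
  have balance: "r * sin (pi * q) = (1 - r) * sin (pi * p)"
    using assms(8) by simp
  have "frac_kernel (\<alpha> - 1) p q"
    using assms(1-5,7) balance by (intro frac_kernel_if_sine_balance) auto
  then obtain D where "(frac_int (2 - \<alpha>) (deriv K) has_real_derivative D) (at x)"
    and "(frac_int_star (2 - \<alpha>) (deriv K) has_real_derivative - sin (pi * p) / sin (pi * q) * D) (at x)"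
    using frac_kernel.frac_ints_deriv_kernel_integral_has_derivative[where \<mu> = "\<alpha> - 1", OF _ assms(6) x]
    by auto
  moreover have "r * D + (1 - r) * (- sin (pi * p) / sin (pi * q) * D) = 0"
  proof -
    have "sin (pi * q) < 0"
      using \<open>frac_kernel (\<alpha> - 1) p q\<close> by (intro sin_pi_mult_neg) (auto simp: frac_kernel_def)
    then have "r * D + (1 - r) * (- sin (pi * p) / sin (pi * q) * D)
        = D * (r * sin (pi * q) - (1 - r) * sin (pi * p)) / sin (pi * q)"
      by (simp add: field_simps)
    then show ?thesis
      using balance by simp
  qed
  ultimately show "frac_int (2 - \<alpha>) (deriv K) differentiable (at x) \<and>
      frac_int_star (2 - \<alpha>) (deriv K) differentiable (at x) \<and> frac_L r \<alpha> K x = 0"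
    by (rule frac_L_eq_0I)
qed

end
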